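(* Let $\mathcal{A}=(Q,\Sigma,Q_I,\delta,\mathbb{C})$ be a parity tree automaton and $q\in Q$ a useful state. Then $da(\mathcal{A})\ge da(\mathcal{A}_q)$.
   Context: A parity tree automaton (PTA) $\mathcal{A}=(Q,\Sigma,Q_I,\delta,\mathbb{C})$ has $Q$ finite, $Q_I\subseteq Q$, $\delta\subseteq Q\times\Sigma\times Q\times Q$, $\mathbb{C}:Q\to\mathbb{N}$; a computation on $t:\{l,r\}^*\to\Sigma$ is $\phi:\{l,r\}^*\to Q$ with $\phi(\epsilon)\in Q_I$, $(\phi(v),t(v),\phi(vl),\phi(vr))\in\delta$ for all $v$, accepting if on every branch the largest color seen infinitely often is even; $ACC(\mathcal{A},t)$ is the set of accepting computations, $L(\mathcal{A})$ the trees having one. $\mathcal{A}_q$ is $\mathcal{A}$ with initial state set replaced by $\{q\}$. A state $q$ is useful if there exist $t\in L(\mathcal{A})$, $\phi\in ACC(\mathcal{A},t)$ and a node $v$ with $\phi(v)=q$. Degree of ambiguity $da(\mathcal{A})$: $k$ if $|ACC(\mathcal{A},t)|\le k$ for all $t$ and either $k=1$ or this fails for $k-1$; "finite" if all $ACC(\mathcal{A},t)$ are finite but no uniform bound exists; $\aleph_0$ if all are countable but not all finite; $2^{\aleph_0}$ otherwise; ordered $1<2<\dots<\text{finite}<\aleph_0<2^{\aleph_0}$. *)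

theory Defs
  imports Main "HOL-Library.Countable_Set"
begin

datatype dir = L | R

type_synonym node = "dir list"

record ('q, 'a) pta =
  states   :: "'q set"
  alphabet :: "'a set"
  initial  :: "'q set"
  delta    :: "('q \<times> 'a \<times> 'q \<times> 'q) set"
  color    :: "'q \<Rightarrow> nat"

definition pta_wf :: "('q, 'a) pta \<Rightarrow> bool" where
  "pta_wf A \<longleftrightarrow> finite (states A) \<and> initial A \<subseteq> states A \<and>
     delta A \<subseteq> states A \<times> alphabet A \<times> states A \<times> states A"

definition is_tree :: "('q, 'a) pta \<Rightarrow> (node \<Rightarrow> 'a) \<Rightarrow> bool" where
  "is_tree A t \<longleftrightarrow> (\<forall>v. t v \<in> alphabet A)"

definition is_computation :: "('q, 'a) pta \<Rightarrow> (node \<Rightarrow> 'a) \<Rightarrow> (node \<Rightarrow> 'q) \<Rightarrow> bool" where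
  "is_computation A t \<phi> \<longleftrightarrow> (\<forall>v. \<phi> v \<in> states A) \<and> \<phi> [] \<in> initial A \<and>
     (\<forall>v. (\<phi> v, t v, \<phi> (v @ [L]), \<phi> (v @ [R])) \<in> delta A)"

definition branch_node :: "(nat \<Rightarrow> dir) \<Rightarrow> nat \<Rightarrow> node" where
  "branch_node \<pi> n = map \<pi> [0..<n]"

definition accepting :: "('q, 'a) pta \<Rightarrow> (node \<Rightarrow> 'q) \<Rightarrow> bool" where
  "accepting A \<phi> \<longleftrightarrow> (\<forall>\<pi> :: nat \<Rightarrow> dir.
     \<exists>c. even c \<and> (\<exists>\<^sub>\<infinity>n. color A (\<phi> (branch_node \<pi> n)) = c) \<and>
         (\<forall>d. (\<exists>\<^sub>\<infinity>n. color A (\<phi> (branch_node \<pi> n)) = d) \<longrightarrow> d \<le> c))"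

definition ACC :: "('q, 'a) pta \<Rightarrow> (node \<Rightarrow> 'a) \<Rightarrow> (node \<Rightarrow> 'q) set" where
  "ACC A t = {\<phi>. is_computation A t \<phi> \<and> accepting A \<phi>}"

definition lang :: "('q, 'a) pta \<Rightarrow> (node \<Rightarrow> 'a) set" where
  "lang A = {t. is_tree A t \<and> ACC A t \<noteq> {}}"

definition restrict_init :: "('q, 'a) pta \<Rightarrow> 'q \<Rightarrow> ('q, 'a) pta" where
  "restrict_init A q = A\<lparr>initial := {q}\<rparr>"

definition useful :: "('q, 'a) pta \<Rightarrow> 'q \<Rightarrow> bool" where
  "useful A q \<longleftrightarrow> (\<exists>t \<in> lang A. \<exists>\<phi> \<in> ACC A t. \<exists>v. \<phi> v = q)"

datatype degree = DFin nat | DFinite | DAleph0 | DContinuum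

definition da :: "('q, 'a) pta \<Rightarrow> degree" where
  "da A =
    (if \<exists>k::nat. k \<ge> 1 \<and> (\<forall>t. is_tree A t \<longrightarrow> finite (ACC A t) \<and> card (ACC A t) \<le> k)
     then DFin (LEAST k::nat. k \<ge> 1 \<and> (\<forall>t. is_tree A t \<longrightarrow> finite (ACC A t) \<and> card (ACC A t) \<le> k))
     else if \<forall>t. is_tree A t \<longrightarrow> finite (ACC A t) then DFinite
     else if \<forall>t. is_tree A t \<longrightarrow> countable (ACC A t) then DAleph0
     else DContinuum)"

fun degree_rank :: "degree \<Rightarrow> nat \<times> nat" where
  "degree_rank (DFin k) = (0, k)"
| "degree_rank DFinite = (1, 0)"
| "degree_rank DAleph0 = (2, 0)"
| "degree_rank DContinuum = (3, 0)"

definition degree_le :: "degree \<Rightarrow> degree \<Rightarrow> bool" where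
  "degree_le x y \<longleftrightarrow> (let (a, b) = degree_rank x; (c, d) = degree_rank y in a < c \<or> (a = c \<and> b \<le> d))"

end

(*
  Take an accepting run \<phi> of A on some tree t with \<phi> v = q. Replacing the subtree of t at v
  by an arbitrary tree s, and \<phi> below v by an accepting run \<psi> of A_q on s, gives an accepting
  run of A: a branch through v eventually follows a branch of \<psi>, and parity acceptance ignores
  finite prefixes, while every other branch follows \<phi>. As \<psi> is recovered from the grafted
  run, ACC(A_q, s) embeds into ACC(A, t'), and every bound defining da passes from A to A_q.
*)
theory Submission
  imports Defs "HOL-Library.Sublist"
begin

lemma da_DFin_bound:
  assumes "da A = DFin k"
  shows "1 \<le> k \<and> (\<forall>t. is_tree A t \<longrightarrow> finite (ACC A t) \<and> card (ACC A t) \<le> k)"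
proof -
  let ?bound = "\<lambda>k. 1 \<le> k \<and> (\<forall>t. is_tree A t \<longrightarrow> finite (ACC A t) \<and> card (ACC A t) \<le> k)"
  have "\<exists>k. ?bound k" and k: "k = (LEAST k. ?bound k)"
    using assms by (auto simp: da_def split: if_splits)
  from LeastI_ex[OF this(1)] show ?thesis unfolding k .
qed

lemma degree_le_da_DFin:
  assumes "1 \<le> k" and "\<forall>t. is_tree A t \<longrightarrow> finite (ACC A t) \<and> card (ACC A t) \<le> k"
  shows "degree_le (da A) (DFin k)"
proof -
  let ?bound = "\<lambda>k. 1 \<le> k \<and> (\<forall>t. is_tree A t \<longrightarrow> finite (ACC A t) \<and> card (ACC A t) \<le> k)"
  have "da A = DFin (LEAST k. ?bound k)"
    using assms by (auto simp: da_def)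
  moreover have "(LEAST k. ?bound k) \<le> k"
    using assms by (intro Least_le) simp
  ultimately show ?thesis by (simp add: degree_le_def)
qed

lemma da_DFinite_finite: "da A = DFinite \<Longrightarrow> \<forall>t. is_tree A t \<longrightarrow> finite (ACC A t)"
  by (auto simp: da_def split: if_splits)

lemma degree_le_da_DFinite:
  "\<forall>t. is_tree A t \<longrightarrow> finite (ACC A t) \<Longrightarrow> degree_le (da A) DFinite"
  by (auto simp: da_def degree_le_def)

lemma da_DAleph0_countable: "da A = DAleph0 \<Longrightarrow> \<forall>t. is_tree A t \<longrightarrow> countable (ACC A t)"
  by (auto simp: da_def split: if_splits)

lemma degree_le_da_DAleph0:
  "\<forall>t. is_tree A t \<longrightarrow> countable (ACC A t) \<Longrightarrow> degree_le (da A) DAleph0"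
  by (auto simp: da_def degree_le_def)

lemma degree_le_DContinuum: "degree_le d DContinuum"
  by (cases d) (simp_all add: degree_le_def)

lemma degree_le_da_if_ACC_embeds:
  assumes tree_A: "\<And>t. is_tree B t \<Longrightarrow> is_tree A (g t)"
    and inj: "\<And>t. is_tree B t \<Longrightarrow> inj_on (f t) (ACC B t)"
    and into: "\<And>t. is_tree B t \<Longrightarrow> f t ` ACC B t \<subseteq> ACC A (g t)"
  shows "degree_le (da B) (da A)"
proof -
  have finite_B: "finite (ACC B t) \<and> card (ACC B t) \<le> card (ACC A (g t))"
    if "is_tree B t" "finite (ACC A (g t))" for t
    using inj_on_finite[OF inj into] card_inj_on_le[OF inj into] that by blast
  have countable_B: "countable (ACC B t)" if "is_tree B t" "countable (ACC A (g t))" for t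
    using that inj into by (meson countable_image_inj_on countable_subset)
  show ?thesis
  proof (cases "da A")
    case (DFin k)
    with da_DFin_bound have "1 \<le> k" "\<forall>t. is_tree A t \<longrightarrow> finite (ACC A t) \<and> card (ACC A t) \<le> k"
      by blast+
    then have "\<forall>t. is_tree B t \<longrightarrow> finite (ACC B t) \<and> card (ACC B t) \<le> k"
      using tree_A finite_B le_trans by blast
    then show ?thesis using DFin \<open>1 \<le> k\<close> by (simp add: degree_le_da_DFin)
  next
    case DFinite
    then have "\<forall>t. is_tree B t \<longrightarrow> finite (ACC B t)"
      using da_DFinite_finite tree_A finite_B by blast
    then show ?thesis using DFinite by (simp add: degree_le_da_DFinite)
  next
    case DAleph0
    then have "\<forall>t. is_tree B t \<longrightarrow> countable (ACC B t)"
      using da_DAleph0_countable tree_A countable_B by blast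
    then show ?thesis using DAleph0 by (simp add: degree_le_da_DAleph0)
  next
    case DContinuum
    then show ?thesis by (simp add: degree_le_DContinuum)
  qed
qed

lemma length_branch_node [simp]: "length (branch_node \<pi> n) = n"
  by (simp add: branch_node_def)

lemma take_branch_node: "m \<le> n \<Longrightarrow> take m (branch_node \<pi> n) = branch_node \<pi> m"
  by (simp add: branch_node_def take_map min_def)

lemma branch_node_add:
  "branch_node \<pi> (m + n) = branch_node \<pi> m @ branch_node (\<lambda>i. \<pi> (m + i)) n"
  by (induction n) (simp_all add: branch_node_def)

lemma prefix_iff_take_length: "prefix xs ys \<longleftrightarrow> take (length xs) ys = xs"
  unfolding prefix_def by (metis append_eq_conv_conj append_take_drop_id)

lemma prefix_branch_node_iff:
  "prefix v (branch_node \<pi> n) \<longleftrightarrow> length v \<le> n \<and> branch_node \<pi> (length v) = v"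
proof (cases "length v \<le> n")
  case True
  then show ?thesis by (simp add: prefix_iff_take_length take_branch_node)
next
  case False
  then show ?thesis using prefix_length_le by fastforce
qed

definition parity_accepting :: "(nat \<Rightarrow> nat) \<Rightarrow> bool" where
  "parity_accepting s \<longleftrightarrow>
     (\<exists>c. even c \<and> (\<exists>\<^sub>\<infinity>n. s n = c) \<and> (\<forall>d. (\<exists>\<^sub>\<infinity>n. s n = d) \<longrightarrow> d \<le> c))"

lemma accepting_iff_parity_accepting:
  "accepting A \<phi> \<longleftrightarrow> (\<forall>\<pi>. parity_accepting (\<lambda>n. color A (\<phi> (branch_node \<pi> n))))"
  by (simp add: accepting_def parity_accepting_def)

lemma INFM_nat_shift: "(\<exists>\<^sub>\<infinity>n. P (m + n)) \<longleftrightarrow> (\<exists>\<^sub>\<infinity>n::nat. P n)"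
  using eventually_sequentially_seg[of "\<lambda>n. \<not> P n" m]
  by (simp add: frequently_def cofinite_eq_sequentially add.commute)

lemma parity_accepting_shift: "parity_accepting (\<lambda>n. s (m + n)) \<longleftrightarrow> parity_accepting s"
  by (simp add: parity_accepting_def INFM_nat_shift[where P = "\<lambda>n. s n = _"])

definition graft :: "(node \<Rightarrow> 'b) \<Rightarrow> node \<Rightarrow> (node \<Rightarrow> 'b) \<Rightarrow> node \<Rightarrow> 'b" where
  "graft f v g w = (if prefix v w then g (drop (length v) w) else f w)"

lemma graft_append [simp]: "graft f v g (v @ u) = g u"
  by (simp add: graft_def)

lemma graft_outside: "\<not> prefix v w \<Longrightarrow> graft f v g w = f w"
  by (simp add: graft_def)

lemma inj_graft: "inj (graft f v)"
proof (rule injI)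
  fix g h assume "graft f v g = graft f v h"
  then have "graft f v g (v @ u) = graft f v h (v @ u)" for u by simp
  then show "g = h" by auto
qed

lemma is_tree_graft: "is_tree A s \<Longrightarrow> is_tree A t \<Longrightarrow> is_tree A (graft s v t)"
  by (simp add: is_tree_def graft_def)

lemma is_tree_restrict_init [simp]: "is_tree (restrict_init A q) t \<longleftrightarrow> is_tree A t"
  by (simp add: is_tree_def restrict_init_def)

lemma accepting_restrict_init [simp]: "accepting (restrict_init A q) \<phi> \<longleftrightarrow> accepting A \<phi>"
  by (simp add: accepting_def restrict_init_def)

lemma is_computation_graft:
  assumes \<phi>: "is_computation A t \<phi>" and \<psi>: "is_computation (restrict_init A (\<phi> v)) s \<psi>"
  shows "is_computation A (graft t v s) (graft \<phi> v \<psi>)"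
proof -
  have "\<psi> [] = \<phi> v" using \<psi> by (simp add: is_computation_def restrict_init_def)
  then have outside: "graft \<phi> v \<psi> w = \<phi> w" if "\<not> prefix v w \<or> w = v" for w
    using that by (auto simp: graft_def)
  show ?thesis
    unfolding is_computation_def
  proof (intro conjI allI)
    show "graft \<phi> v \<psi> w \<in> states A" for w
      using \<phi> \<psi> by (simp add: graft_def is_computation_def restrict_init_def)
    show "graft \<phi> v \<psi> [] \<in> initial A"
      using \<phi> outside[of "[]"] by (simp add: is_computation_def)
  next
    fix u
    show "(graft \<phi> v \<psi> u, graft t v s u, graft \<phi> v \<psi> (u @ [L]), graft \<phi> v \<psi> (u @ [R])) \<in> delta A"
    proof (cases "prefix v u")
      case True
      then obtain w where "u = v @ w" by (auto simp: prefix_def)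
      then show ?thesis
        using \<psi> by (simp add: is_computation_def restrict_init_def)
    next
      case False
      then show ?thesis
        using \<phi> outside by (simp add: is_computation_def graft_outside)
    qed
  qed
qed

lemma accepting_graft:
  assumes "accepting A \<phi>" and "accepting A \<psi>"
  shows "accepting A (graft \<phi> v \<psi>)"
  unfolding accepting_iff_parity_accepting
proof
  fix \<pi>
  show "parity_accepting (\<lambda>n. color A (graft \<phi> v \<psi> (branch_node \<pi> n)))"
  proof (cases "branch_node \<pi> (length v) = v")
    case True
    then have "graft \<phi> v \<psi> (branch_node \<pi> (length v + n)) = \<psi> (branch_node (\<lambda>i. \<pi> (length v + i)) n)"
      for n by (simp add: branch_node_add)
    then have "parity_accepting (\<lambda>n. color A (graft \<phi> v \<psi> (branch_node \<pi> (length v + n))))"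
      using assms(2) by (simp add: accepting_iff_parity_accepting)
    then show ?thesis
      using parity_accepting_shift[of "\<lambda>n. color A (graft \<phi> v \<psi> (branch_node \<pi> n))"] by simp
  next
    case False
    then have "graft \<phi> v \<psi> (branch_node \<pi> n) = \<phi> (branch_node \<pi> n)" for n
      by (simp add: graft_outside prefix_branch_node_iff)
    then show ?thesis using assms(1) by (simp add: accepting_iff_parity_accepting)
  qed
qed

lemma graft_in_ACC:
  "\<phi> \<in> ACC A t \<Longrightarrow> \<psi> \<in> ACC (restrict_init A (\<phi> v)) s \<Longrightarrow> graft \<phi> v \<psi> \<in> ACC A (graft t v s)"
  by (simp add: ACC_def is_computation_graft accepting_graft)

theorem lemma3p4:
  fixes A :: "('q, 'a) pta" and q :: 'q
  assumes "pta_wf A"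
    and "q \<in> states A"
    and "useful A q"
  shows "degree_le (da (restrict_init A q)) (da A)"
proof -
  obtain t \<phi> v where t: "is_tree A t" and \<phi>: "\<phi> \<in> ACC A t" and "\<phi> v = q"
    using \<open>useful A q\<close> by (auto simp: useful_def lang_def)
  show ?thesis
  proof (rule degree_le_da_if_ACC_embeds)
    show "is_tree A (graft t v s)" if "is_tree (restrict_init A q) s" for s
      using t that by (simp add: is_tree_graft)
    show "inj_on (graft \<phi> v) (ACC (restrict_init A q) s)" for s
      using inj_graft by (rule inj_on_subset) simp
    show "graft \<phi> v ` ACC (restrict_init A q) s \<subseteq> ACC A (graft t v s)" for s
      using graft_in_ACC[OF \<phi>] \<open>\<phi> v = q\<close> by blast
  qed
qed

end
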